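(* Let $\Omega=[0,1]^d$ and let $\mathbb{P}$ be a probability measure for a pair $(X,Y)$ with $X\in\Omega$ and $Y\in\{0,1\}$. Let $T$ and $T'$ be two classification trees on $\Omega$, each having $k$ leaf nodes; denote the leaf nodes of $T$ by $A_1,\dots,A_k$ and those of $T'$ by $A_1',\dots,A_k'$. If for some $\epsilon\ge 0$ $$\sup_{1\le j\le k}\mathbb{P}(A_j\,\triangle\,A_j')\le \epsilon,$$ then $$|I(T,\mathbb{P})-I(T',\mathbb{P})|\le 5k\epsilon .$$
   Context: A classification tree on $\Omega$ is obtained by recursively splitting $\Omega$ with axis-aligned cuts $\{X[j]\le z\}$ / $\{X[j]>z\}$; its leaf nodes are hyperrectangles forming a partition of $\Omega$. For a set $A\subset\Omega$, $\mathbb{P}(A)$ denotes $\mathbb{P}(X\in A)$, $\triangle$ denotes symmetric set difference, and $\eta(A)=\mathbb{E}_{\mathbb{P}}(Y\mid X\in A)$. The (Gini) impurity of a node $A$ is $I(A,\mathbb{P})=2\eta(A)(1-\eta(A))$, and the impurity of a tree $T$ with leaf nodes $A_1,\dots,A_k$ is $I(T,\mathbb{P})=\sum_{l=1}^k \mathbb{P}(A_l)\,I(A_l,\mathbb{P})$ (a leaf with $\mathbb{P}(A_l)=0$ contributes $0$). *)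

theory Defs
  imports "HOL-Probability.Probability"
begin

text \<open>The unit cube Omega = [0,1]^d, with d = CARD('d).\<close>
definition Omega :: "(real ^ 'd) set" where
  "Omega = {x. \<forall>i. 0 \<le> x $ i \<and> x $ i \<le> 1}"

text \<open>Classification trees: a leaf, or an axis-aligned split on coordinate j at threshold z
  (left child: X[j] <= z, right child: X[j] > z).\<close>
datatype 'd ctree = Leaf | Split 'd real "'d ctree" "'d ctree"

fun leaves :: "'d ctree \<Rightarrow> (real ^ 'd) set \<Rightarrow> (real ^ 'd) set list" where
  "leaves Leaf R = [R]"
| "leaves (Split j z l r) R =
     leaves l (R \<inter> {x. x $ j \<le> z}) @ leaves r (R \<inter> {x. x $ j > z})"

definition PX :: "'w measure \<Rightarrow> ('w \<Rightarrow> real ^ 'd) \<Rightarrow> (real ^ 'd) set \<Rightarrow> real" where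
  "PX M X A = measure M {w \<in> space M. X w \<in> A}"

text \<open>eta(A) = E(Y | X in A) (taken to be 0 when P(A) = 0).\<close>
definition eta :: "'w measure \<Rightarrow> ('w \<Rightarrow> real ^ 'd) \<Rightarrow> ('w \<Rightarrow> real) \<Rightarrow> (real ^ 'd) set \<Rightarrow> real" where
  "eta M X Y A = (\<integral>w. indicator {w \<in> space M. X w \<in> A} w * Y w \<partial>M) / PX M X A"

definition node_impurity :: "'w measure \<Rightarrow> ('w \<Rightarrow> real ^ 'd) \<Rightarrow> ('w \<Rightarrow> real) \<Rightarrow> (real ^ 'd) set \<Rightarrow> real" where
  "node_impurity M X Y A = 2 * eta M X Y A * (1 - eta M X Y A)"

definition tree_impurity :: "'w measure \<Rightarrow> ('w \<Rightarrow> real ^ 'd) \<Rightarrow> ('w \<Rightarrow> real) \<Rightarrow> 'd ctree \<Rightarrow> real" where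
  "tree_impurity M X Y T =
     sum_list (map (\<lambda>A. PX M X A * node_impurity M X Y A) (leaves T Omega))"

definition symdiff :: "'a set \<Rightarrow> 'a set \<Rightarrow> 'a set" where
  "symdiff A B = (A - B) \<union> (B - A)"

end

theory Submission
  imports Defs
begin

(* For a leaf A write p = P(A) and q = E(Y; X in A). Its contribution P(A) I(A) to the impurity
   is 2 q (p - q) / p, which never decreases when mass is added to the leaf and grows by at most
   twice the added mass (this is where 0 <= Y <= 1 enters). Comparing A and A' through their
   intersection gives |P(A) I(A) - P(A') I(A')| <= 2 P(A symdiff A'), and summing over the k
   matched leaves bounds the difference of the impurities by 2 k eps, which is below 5 k eps. *)

(* At p = 0 the division yields 0, matching the convention that an empty leaf contributes 0. *)
definition gini_mass :: "real \<Rightarrow> real \<Rightarrow> real" where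
  "gini_mass p s = 2 * s * (p - s) / p"

lemma gini_mass_le:
  assumes "0 \<le> s" "s \<le> p"
  shows "gini_mass p s \<le> 2 * s"
  using assms by (simp add: gini_mass_def divide_simps mult_left_mono)

lemma gini_mass_le_add:
  assumes "0 \<le> q" "q \<le> p" "0 \<le> r" "r \<le> d"
  shows "gini_mass p q \<le> gini_mass (p + d) (q + r)"
proof (cases "p = 0")
  case True
  then show ?thesis using assms by (simp add: gini_mass_def)
next
  case False
  have "(p + d) * (q * (p - q)) \<le> p * ((q + r) * (p + d - (q + r)))"
  proof -
    have "p * ((q + r) * (p + d - (q + r))) - (p + d) * (q * (p - q))
          = r * (p - q)^2 + (d - r) * q^2 + p * r * (d - r)"
      by (simp add: algebra_simps power2_eq_square)
    also have "\<dots> \<ge> 0" using assms by simp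
    finally show ?thesis by simp
  qed
  then show ?thesis using assms False by (simp add: gini_mass_def field_simps)
qed

lemma gini_mass_add_le:
  assumes "0 \<le> q" "q \<le> p" "0 \<le> r" "r \<le> d"
  shows "gini_mass (p + d) (q + r) \<le> gini_mass p q + 2 * d"
proof (cases "p = 0")
  case True
  then show ?thesis using assms gini_mass_le[of r d] by (simp add: gini_mass_def)
next
  case False
  have "p * ((q + r) * (p + d - (q + r))) \<le> (p + d) * (q * (p - q)) + d * p * (p + d)"
  proof -
    have "(p + d) * (q * (p - q)) + d * p * (p + d) - p * ((q + r) * (p + d - (q + r)))
          = (d - r) * (p^2 - q^2) + r * (p * r + 2 * p * q - q^2) + p * d * (d - r)"
      by (simp add: algebra_simps power2_eq_square)
    also have "\<dots> \<ge> 0"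
    proof -
      have "0 \<le> (d - r) * (p^2 - q^2)" using assms by (simp add: power_mono)
      moreover have "0 \<le> p * r + 2 * p * q - q^2"
      proof -
        have "q^2 \<le> p * q" using assms by (simp add: power2_eq_square mult_right_mono)
        moreover have "0 \<le> p * r" "0 \<le> p * q" using assms by simp_all
        ultimately show ?thesis by linarith
      qed
      then have "0 \<le> r * (p * r + 2 * p * q - q^2)" using assms by simp
      moreover have "0 \<le> p * d * (d - r)" using assms by simp
      ultimately show ?thesis by linarith
    qed
    finally show ?thesis by simp
  qed
  then show ?thesis using assms False by (simp add: gini_mass_def field_simps)
qed

definition weighted_gini :: "'a measure \<Rightarrow> ('a \<Rightarrow> real) \<Rightarrow> 'a set \<Rightarrow> real" where
  "weighted_gini M Y F = gini_mass (measure M F) (LINT w:F|M. Y w)"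

lemma PX_mult_node_impurity:
  "PX M X B * node_impurity M X Y B = weighted_gini M Y {w \<in> space M. X w \<in> B}"
proof -
  have "a * (2 * (s / a) * (1 - s / a)) = gini_mass a s" for a s :: real
    by (cases "a = 0") (simp_all add: gini_mass_def field_simps)
  then show ?thesis
    unfolding node_impurity_def eta_def weighted_gini_def PX_def set_lebesgue_integral_def
    by simp
qed

lemma Omega_sets_borel: "Omega \<in> sets borel"
  unfolding Omega_def
  by (intro borel_closed closed_Collect_all closed_Collect_conj closed_Collect_le continuous_intros)

lemma sets_borel_leaves:
  fixes t :: "'d::finite ctree"
  assumes "R \<in> sets borel" and "B \<in> set (leaves t R)"
  shows "B \<in> sets borel"
  using assms
proof (induction t arbitrary: R)
  case Leaf
  then show ?case by simp
next
  case (Split j z l r)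
  have "{x::real^'d. x $ j \<le> z} \<in> sets borel"
    by (intro borel_closed closed_Collect_le continuous_intros)
  then have left: "R \<inter> {x. x $ j \<le> z} \<in> sets borel"
    using Split.prems(1) by (rule sets.Int[rotated])
  have "{x::real^'d. x $ j > z} \<in> sets borel"
    by (intro borel_open open_Collect_less continuous_intros)
  then have right: "R \<inter> {x. x $ j > z} \<in> sets borel"
    using Split.prems(1) by (rule sets.Int[rotated])
  from Split.prems(2)
  consider "B \<in> set (leaves l (R \<inter> {x. x $ j \<le> z}))" | "B \<in> set (leaves r (R \<inter> {x. x $ j > z}))"
    by auto
  then show ?case
    by cases (use Split.IH(1)[OF left] Split.IH(2)[OF right] in blast)+
qed

lemma tree_impurity_eq_sum:
  assumes "mset (leaves T Omega) = mset (map A [0..<k])"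
  shows "tree_impurity M X Y T = (\<Sum>j<k. PX M X (A j) * node_impurity M X Y (A j))"
proof -
  let ?f = "\<lambda>B. PX M X B * node_impurity M X Y B"
  have sum_list_via_mset: "sum_list (map ?f xs) = sum_mset (image_mset ?f (mset xs))" for xs
    by (simp flip: sum_mset_sum_list)
  have "tree_impurity M X Y T = sum_list (map ?f (leaves T Omega))"
    unfolding tree_impurity_def ..
  also have "\<dots> = sum_list (map ?f (map A [0..<k]))"
    by (simp only: sum_list_via_mset assms)
  also have "\<dots> = (\<Sum>j<k. ?f (A j))"
    by (simp add: sum_list_distinct_conv_sum_set atLeast0LessThan)
  finally show ?thesis .
qed

context finite_measure
begin

lemma set_integral_unit_interval_bounds:
  assumes "Y \<in> borel_measurable M" "\<forall>w \<in> space M. 0 \<le> Y w \<and> Y w \<le> 1" and F: "F \<in> sets M"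
  shows "set_integrable M F Y" "0 \<le> (LINT w:F|M. Y w)" "(LINT w:F|M. Y w) \<le> measure M F"
proof -
  have "integrable M Y"
    using assms by (intro integrable_const_bound[where B = 1]) auto
  then show Y: "set_integrable M F Y"
    unfolding set_integrable_def by (rule integrable_mult_indicator[OF F])
  show "0 \<le> (LINT w:F|M. Y w)"
    unfolding set_lebesgue_integral_def using assms
    by (intro integral_nonneg_AE AE_I2) (auto split: split_indicator)
  have "set_integrable M F (\<lambda>_. 1::real)"
    unfolding set_integrable_def by (rule integrable_mult_indicator[OF F integrable_const])
  then have "(LINT w:F|M. Y w) \<le> (LINT w:F|M. 1)"
    using assms sets.sets_into_space[OF F] by (intro set_integral_mono[OF Y]) auto
  then show "(LINT w:F|M. Y w) \<le> measure M F"
    using F by (simp add: set_integral_const)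
qed

context
  fixes Y :: "'a \<Rightarrow> real"
  assumes Y_measurable: "Y \<in> borel_measurable M"
    and Y_unit_interval: "\<forall>w \<in> space M. 0 \<le> Y w \<and> Y w \<le> 1"
begin

lemma weighted_gini_Un_bounds:
  assumes C: "C \<in> sets M" and D: "D \<in> sets M" and disjoint: "C \<inter> D = {}"
  shows "weighted_gini M Y C \<le> weighted_gini M Y (C \<union> D)"
    and "weighted_gini M Y (C \<union> D) \<le> weighted_gini M Y C + 2 * measure M D"
proof -
  note bounds = set_integral_unit_interval_bounds[OF Y_measurable Y_unit_interval]
  have measure_Un: "measure M (C \<union> D) = measure M C + measure M D"
    using C D disjoint by (simp add: finite_measure_Union)
  have integral_Un: "(LINT w:C \<union> D|M. Y w) = (LINT w:C|M. Y w) + (LINT w:D|M. Y w)"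
    using disjoint bounds(1)[OF C] bounds(1)[OF D] by (rule set_integral_Un)
  show "weighted_gini M Y C \<le> weighted_gini M Y (C \<union> D)"
    unfolding weighted_gini_def measure_Un integral_Un
    using bounds(2,3)[OF C] bounds(2,3)[OF D] by (rule gini_mass_le_add)
  show "weighted_gini M Y (C \<union> D) \<le> weighted_gini M Y C + 2 * measure M D"
    unfolding weighted_gini_def measure_Un integral_Un
    using bounds(2,3)[OF C] bounds(2,3)[OF D] by (rule gini_mass_add_le)
qed

lemma weighted_gini_diff_le:
  assumes F: "F \<in> sets M" and G: "G \<in> sets M"
  shows "\<bar>weighted_gini M Y F - weighted_gini M Y G\<bar> \<le> 2 * measure M ((F - G) \<union> (G - F))"
proof -
  have split: "weighted_gini M Y (A \<inter> B) \<le> weighted_gini M Y A \<and>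
      weighted_gini M Y A \<le> weighted_gini M Y (A \<inter> B) + 2 * measure M (A - B)"
    if "A \<in> sets M" "B \<in> sets M" for A B
  proof -
    have "A \<inter> B \<inter> (A - B) = {}" by blast
    then show ?thesis
      using weighted_gini_Un_bounds[of "A \<inter> B" "A - B"] that by (simp add: Int_Diff_Un)
  qed
  from split[OF F G] split[OF G F, unfolded Int_commute[of G F]]
  have "\<bar>weighted_gini M Y F - weighted_gini M Y G\<bar> \<le> 2 * measure M (F - G) + 2 * measure M (G - F)"
    using measure_nonneg[of M "F - G"] measure_nonneg[of M "G - F"] by linarith
  moreover have "measure M ((F - G) \<union> (G - F)) = measure M (F - G) + measure M (G - F)"
    using F G by (intro finite_measure_Union) auto
  ultimately show ?thesis by linarith
qed

lemma leaf_impurity_diff_le: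
  assumes X: "X \<in> borel_measurable M" and B: "B \<in> sets borel" and B': "B' \<in> sets borel"
  shows "\<bar>PX M X B * node_impurity M X Y B - PX M X B' * node_impurity M X Y B'\<bar>
    \<le> 2 * PX M X (symdiff B B')"
proof -
  define E where "E C = {w \<in> space M. X w \<in> C}" for C
  have E_sets: "E C \<in> sets M" if "C \<in> sets borel" for C
  proof -
    have "E C = X -` C \<inter> space M" unfolding E_def by auto
    then show ?thesis using measurable_sets[OF X that] by simp
  qed
  have "E (symdiff B B') = (E B - E B') \<union> (E B' - E B)"
    unfolding E_def symdiff_def by auto
  then show ?thesis
    using weighted_gini_diff_le[OF E_sets[OF B] E_sets[OF B']]
    unfolding PX_mult_node_impurity by (simp add: PX_def E_def)
qed

lemma tree_impurity_diff_le:
  assumes X: "X \<in> borel_measurable M"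
    and T: "mset (leaves T Omega) = mset (map A [0..<k])"
    and T': "mset (leaves T' Omega) = mset (map A' [0..<k])"
  shows "\<bar>tree_impurity M X Y T - tree_impurity M X Y T'\<bar>
    \<le> 2 * (\<Sum>j<k. PX M X (symdiff (A j) (A' j)))"
proof -
  have leaves_borel: "A j \<in> sets borel" "A' j \<in> sets borel" if "j < k" for j
    using mset_eq_setD[OF T] mset_eq_setD[OF T'] that Omega_sets_borel
    by (auto intro: sets_borel_leaves)
  have "\<bar>tree_impurity M X Y T - tree_impurity M X Y T'\<bar>
      = \<bar>\<Sum>j<k. PX M X (A j) * node_impurity M X Y (A j) - PX M X (A' j) * node_impurity M X Y (A' j)\<bar>"
    unfolding tree_impurity_eq_sum[OF T] tree_impurity_eq_sum[OF T'] sum_subtractf ..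
  also have "\<dots> \<le> (\<Sum>j<k. \<bar>PX M X (A j) * node_impurity M X Y (A j) - PX M X (A' j) * node_impurity M X Y (A' j)\<bar>)"
    by (rule sum_abs)
  also have "\<dots> \<le> (\<Sum>j<k. 2 * PX M X (symdiff (A j) (A' j)))"
    using leaves_borel by (intro sum_mono leaf_impurity_diff_le[OF X]) auto
  finally show ?thesis
    by (simp add: sum_distrib_left)
qed

end

end

theorem mainTheorem1:
  fixes M :: "'w measure" and X :: "'w \<Rightarrow> real ^ 'd" and Y :: "'w \<Rightarrow> real"
    and T T' :: "'d ctree" and k :: nat and A A' :: "nat \<Rightarrow> (real ^ 'd) set"
    and \<epsilon> :: real
  assumes "prob_space M"
    and "X \<in> borel_measurable M" and "Y \<in> borel_measurable M"
    and "\<forall>w \<in> space M. X w \<in> Omega \<and> Y w \<in> {0, 1}"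
    and "mset (leaves T Omega) = mset (map A [0..<k])"
    and "mset (leaves T' Omega) = mset (map A' [0..<k])"
    and "\<epsilon> \<ge> 0"
    and "\<forall>j < k. PX M X (symdiff (A j) (A' j)) \<le> \<epsilon>"
  shows "\<bar>tree_impurity M X Y T - tree_impurity M X Y T'\<bar> \<le> 5 * real k * \<epsilon>"
proof -
  interpret prob_space M by fact
  have Y_unit_interval: "\<forall>w \<in> space M. 0 \<le> Y w \<and> Y w \<le> 1"
    using assms(4) by auto
  have "\<bar>tree_impurity M X Y T - tree_impurity M X Y T'\<bar>
      \<le> 2 * (\<Sum>j<k. PX M X (symdiff (A j) (A' j)))"
    by (rule tree_impurity_diff_le[OF assms(3) Y_unit_interval assms(2,5,6)])
  also have "\<dots> \<le> 2 * (\<Sum>j<k. \<epsilon>)"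
    using assms(8) by (intro mult_left_mono sum_mono) auto
  also have "\<dots> \<le> 5 * real k * \<epsilon>"
    using assms(7) by simp
  finally show ?thesis .
qed

end
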